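(* For every $n\ge1$, the elements $z_{2k}$, $k=0,\dots,\lfloor\frac{n-1}{2}\rfloor$, together with the elementary symmetric polynomials $\sigma_{2k}$, $k=1,\dots,\lfloor\frac n2\rfloor$, form an algebraically independent set of generators of the ring $\mathbb C[x_1,\dots,x_n]^{S_n}$ of symmetric polynomials.
   Context: $U(\mathfrak h_n)$ is the associative superalgebra generated by odd elements $\xi_1,\dots,\xi_n$ with $\xi_i\xi_j+\xi_j\xi_i=0$ for $i\neq j$; $x_i=\xi_i^2$ are central. Let $T$ be the $\mathbb C[x_1,\dots,x_n]$-linear endomorphism of the free $\mathbb C[x_1,\dots,x_n]$-module with basis $\xi_1,\dots,\xi_n$ given by $T(\xi_j)=\sum_i t_{ij}\xi_i$ with $t_{ii}=0$, $t_{ij}=x_j$ for $i<j$, $t_{ij}=-x_j$ for $i>j$. Put $\phi_0=\sum_i\xi_i$, $\phi_k=T^k(\phi_0)$, and $z_{2k}=\frac12(\phi_0\phi_{2k}+\phi_{2k}\phi_0)\in\mathbb C[x_1,\dots,x_n]$. $\sigma_p$ denotes the $p$-th elementary symmetric polynomial in $x_1,\dots,x_n$. *)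

theory Defs
  imports Complex_Main "HOL-Library.Poly_Mapping" "HOL-Combinatorics.Permutations"
begin

type_synonym 'v mpoly = "('v \<Rightarrow>\<^sub>0 nat) \<Rightarrow>\<^sub>0 complex"

definition Var :: "'v \<Rightarrow> 'v mpoly" where
  "Var i = Poly_Mapping.single (Poly_Mapping.single i 1) 1"

definition Const :: "complex \<Rightarrow> 'v mpoly" where
  "Const c = Poly_Mapping.single 0 c"

definition vars :: "'v mpoly \<Rightarrow> 'v set" where
  "vars p = (\<Union>m\<in>Poly_Mapping.keys p. Poly_Mapping.keys m)"

definition subst :: "('v \<Rightarrow> 'w mpoly) \<Rightarrow> 'v mpoly \<Rightarrow> 'w mpoly" where
  "subst f p = (\<Sum>m\<in>Poly_Mapping.keys p. Const (Poly_Mapping.lookup p m) *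
     (\<Prod>i\<in>Poly_Mapping.keys m. f i ^ Poly_Mapping.lookup m i))"

text \<open>The ring C[x_1,...,x_n]^{S_n}; variable x_{i+1} is Var i, i < n.\<close>
definition sym_polys :: "nat \<Rightarrow> nat mpoly set" where
  "sym_polys n = {p. vars p \<subseteq> {..<n} \<and>
      (\<forall>\<pi>. \<pi> permutes {..<n} \<longrightarrow> subst (\<lambda>i. Var (\<pi> i)) p = p)}"

definition esym :: "nat \<Rightarrow> nat \<Rightarrow> nat mpoly" where
  "esym n p = (\<Sum>S\<in>{S. S \<subseteq> {..<n} \<and> card S = p}. \<Prod>i\<in>S. Var i)"

text \<open>Elements of the free C[x]-module with basis xi_1..xi_n, as coefficient vectors
  (index i < n stands for xi_{i+1}).  Matrix entries t_ij of T.\<close>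
definition tT :: "nat \<Rightarrow> nat \<Rightarrow> nat mpoly" where
  "tT i j = (if i < j then Var j else if j < i then - Var j else 0)"

definition Tmap :: "nat \<Rightarrow> (nat \<Rightarrow> nat mpoly) \<Rightarrow> (nat \<Rightarrow> nat mpoly)" where
  "Tmap n v = (\<lambda>i. \<Sum>j<n. tT i j * v j)"

definition phi :: "nat \<Rightarrow> nat \<Rightarrow> (nat \<Rightarrow> nat mpoly)" where
  "phi n k = (Tmap n ^^ k) (\<lambda>i. 1)"

text \<open>Anticommutator a b + b a of two odd elements a = sum a_i xi_i, b = sum b_i xi_i in
  U(h_n): by the relations xi_i xi_j + xi_j xi_i = 0 (i ~= j), xi_i^2 = x_i it equals
  sum_i 2 a_i b_i x_i.\<close>
definition anticomm :: "nat \<Rightarrow> (nat \<Rightarrow> nat mpoly) \<Rightarrow> (nat \<Rightarrow> nat mpoly) \<Rightarrow> nat mpoly" where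
  "anticomm n a b = (\<Sum>i<n. 2 * a i * b i * Var i)"

text \<open>z_{m} = 1/2 (phi_0 phi_m + phi_m phi_0); the paper's z_{2k} is zz n (2*k).\<close>
definition zz :: "nat \<Rightarrow> nat \<Rightarrow> nat mpoly" where
  "zz n m = Const (1/2) * anticomm n (phi n 0) (phi n m)"

end

theory Submission
  imports Defs "HOL-Computational_Algebra.Formal_Power_Series"
begin

(* By the fundamental theorem of symmetric polynomials, proved by the classical
   leading-monomial argument, substituting sigma_1, ..., sigma_n for n new variables is
   injective with image the symmetric polynomials.  The series
   Phi_i(t) = sum_k phi_k(i) t^k solve Phi = 1 + t T Phi uniquely; passing from n to n+1
   variables multiplies the old solution by a common factor, and induction on n yields
   E(t) * t Z(t) = O(t), where Z(t) = sum_k z_k t^k and E, O collect the sigma_j with j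
   even resp. odd.  Comparing coefficients,
   sigma_(2k+1) = z_(2k) + sum_(i=1..k) sigma_(2i) z_(2k-2i),
   a unitriangular change of variables between sigma_1, ..., sigma_n and the z_(2k),
   sigma_(2k), which transfers both injectivity and the image. *)

abbreviation lookup where "lookup \<equiv> Poly_Mapping.lookup"
abbreviation keys where "keys \<equiv> Poly_Mapping.keys"
abbreviation single where "single \<equiv> Poly_Mapping.single"

section \<open>Substitution into polynomials\<close>

definition eval_monom :: "('v \<Rightarrow> 'w mpoly) \<Rightarrow> ('v \<Rightarrow>\<^sub>0 nat) \<Rightarrow> 'w mpoly" where
  "eval_monom f m = (\<Prod>i\<in>keys m. f i ^ lookup m i)"

lemma eval_monom_eq_prod_superset:
  assumes "finite K" "keys m \<subseteq> K"
  shows "eval_monom f m = (\<Prod>i\<in>K. f i ^ lookup m i)"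
  unfolding eval_monom_def
  by (rule prod.mono_neutral_left) (use assms in \<open>auto simp: in_keys_iff\<close>)

lemma eval_monom_zero [simp]: "eval_monom f 0 = 1"
  by (simp add: eval_monom_def)

lemma eval_monom_add: "eval_monom f (a + b) = eval_monom f a * eval_monom f b"
proof -
  let ?K = "keys a \<union> keys b"
  have "eval_monom f (a + b) = (\<Prod>i\<in>?K. f i ^ lookup (a + b) i)"
    by (rule eval_monom_eq_prod_superset) (auto dest: subsetD[OF keys_add])
  also have "\<dots> = (\<Prod>i\<in>?K. f i ^ lookup a i * f i ^ lookup b i)"
    by (simp add: lookup_add power_add)
  also have "\<dots> = eval_monom f a * eval_monom f b"
    by (simp add: prod.distrib eval_monom_eq_prod_superset[of ?K])
  finally show ?thesis .
qed

lemma Const_zero [simp]: "Const 0 = 0"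
  by (simp add: Const_def)

lemma Const_one [simp]: "Const 1 = 1"
  by (simp add: Const_def)

lemma Const_add: "Const (a + b) = Const a + Const b"
  by (simp add: Const_def single_add)

lemma Const_mult: "Const (a * b) = Const a * Const b"
  by (simp add: Const_def mult_single)

lemma numeral_eq_Const: "(numeral k :: 'v mpoly) = Const (numeral k)"
  by (simp add: Const_def)

lemma lookup_Const_mult: "lookup (Const c * q) m = c * lookup q m"
proof -
  have "Const c * q = Poly_Mapping.map ((*) c) q"
    by (simp add: Const_def mult_map_scale_conv_mult)
  then show ?thesis by (simp add: map.rep_eq when_def)
qed

lemma poly_mapping_eq_sum_single: "p = (\<Sum>m\<in>keys p. single m (lookup p m))"
  by (rule poly_mapping_eqI)
     (simp add: lookup_sum lookup_single when_def in_keys_iff sum.delta' split: if_splits)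

lemma subst_eq_sum: "subst f p = (\<Sum>m\<in>keys p. Const (lookup p m) * eval_monom f m)"
  by (simp add: subst_def eval_monom_def)

lemma subst_eq_sum_superset:
  assumes "finite K" "keys p \<subseteq> K"
  shows "subst f p = (\<Sum>m\<in>K. Const (lookup p m) * eval_monom f m)"
  unfolding subst_eq_sum
  by (rule sum.mono_neutral_left) (use assms in \<open>auto simp: in_keys_iff\<close>)

lemma subst_zero [simp]: "subst f 0 = 0"
  by (simp add: subst_def)

lemma subst_single: "subst f (single m c) = Const c * eval_monom f m"
  by (simp add: subst_eq_sum)

lemma subst_add: "subst f (p + q) = subst f p + subst f q"
proof -
  let ?K = "keys p \<union> keys q"
  have "subst f (p + q) = (\<Sum>m\<in>?K. Const (lookup (p + q) m) * eval_monom f m)"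
    by (rule subst_eq_sum_superset) (auto dest: subsetD[OF keys_add])
  also have "\<dots> = (\<Sum>m\<in>?K. Const (lookup p m) * eval_monom f m + Const (lookup q m) * eval_monom f m)"
    by (simp add: lookup_add Const_add algebra_simps)
  also have "\<dots> = subst f p + subst f q"
    by (simp add: sum.distrib subst_eq_sum_superset[of ?K])
  finally show ?thesis .
qed

lemma subst_diff: "subst f (p - q) = subst f p - subst f q"
  using subst_add[of f "p - q" q] by (simp add: eq_diff_eq)

lemma subst_sum: "subst f (\<Sum>i\<in>A. g i) = (\<Sum>i\<in>A. subst f (g i))"
  by (induction A rule: infinite_finite_induct) (auto simp: subst_add)

lemma subst_mult: "subst f (p * q) = subst f p * subst f q"
proof -
  have "p * q = (\<Sum>m\<in>keys p. single m (lookup p m)) * (\<Sum>m'\<in>keys q. single m' (lookup q m'))"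
    using poly_mapping_eq_sum_single[of p] poly_mapping_eq_sum_single[of q] by simp
  also have "\<dots> = (\<Sum>m\<in>keys p. \<Sum>m'\<in>keys q. single (m + m') (lookup p m * lookup q m'))"
    by (simp add: sum_product mult_single)
  finally have "subst f (p * q) =
      (\<Sum>m\<in>keys p. \<Sum>m'\<in>keys q. Const (lookup p m * lookup q m') * eval_monom f (m + m'))"
    by (simp add: subst_sum subst_single)
  also have "\<dots> = (\<Sum>m\<in>keys p. \<Sum>m'\<in>keys q.
      (Const (lookup p m) * eval_monom f m) * (Const (lookup q m') * eval_monom f m'))"
    by (simp add: Const_mult eval_monom_add algebra_simps)
  also have "\<dots> = subst f p * subst f q"
    by (simp add: subst_eq_sum sum_product)
  finally show ?thesis .
qed

lemma subst_Const [simp]: "subst f (Const c) = Const c"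
  by (simp add: Const_def subst_single)

lemma subst_one [simp]: "subst f 1 = 1"
  using subst_Const[of f 1] by simp

lemma subst_Var [simp]: "subst f (Var i) = f i"
  by (simp add: Var_def subst_single eval_monom_def)

lemma subst_power: "subst f (p ^ k) = subst f p ^ k"
  by (induction k) (auto simp: subst_mult)

lemma subst_prod: "subst f (\<Prod>i\<in>A. g i) = (\<Prod>i\<in>A. subst f (g i))"
  by (induction A rule: infinite_finite_induct) (auto simp: subst_mult)

lemma subst_eval_monom: "subst f (eval_monom g m) = eval_monom (\<lambda>i. subst f (g i)) m"
  by (simp add: eval_monom_def subst_prod subst_power)

lemma subst_subst: "subst f (subst g q) = subst (\<lambda>i. subst f (g i)) q"
  by (simp add: subst_eq_sum[of g] subst_eq_sum[of "\<lambda>i. subst f (g i)"]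
      subst_sum subst_mult subst_eval_monom)

lemma Var_power: "Var i ^ k = single (single i k) 1"
  by (induction k) (auto simp: Var_def mult_single single_add[symmetric] add.commute)

lemma prod_single_one: "(\<Prod>i\<in>A. single (g i) (1::complex)) = single (\<Sum>i\<in>A. g i) 1"
  by (induction A rule: infinite_finite_induct) (auto simp: mult_single)

lemma eval_monom_Var: "eval_monom Var m = single m 1"
proof -
  have "eval_monom Var m = (\<Prod>i\<in>keys m. single (single i (lookup m i)) 1)"
    by (simp add: eval_monom_def Var_power)
  also have "\<dots> = single (\<Sum>i\<in>keys m. single i (lookup m i)) 1"
    by (rule prod_single_one)
  finally show ?thesis
    using poly_mapping_eq_sum_single[of m] by simp
qed

lemma subst_Var_self [simp]: "subst Var p = p"
proof -
  have "subst Var p = (\<Sum>m\<in>keys p. single m (lookup p m))"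
    by (simp add: subst_eq_sum eval_monom_Var Const_def mult_single)
  then show ?thesis using poly_mapping_eq_sum_single[of p] by simp
qed

lemma subst_cong:
  assumes "\<And>i. i \<in> vars p \<Longrightarrow> f i = g i"
  shows "subst f p = subst g p"
proof -
  have "\<And>m i. m \<in> keys p \<Longrightarrow> i \<in> keys m \<Longrightarrow> f i = g i"
    using assms by (auto simp: vars_def)
  then show ?thesis unfolding subst_def
    by (intro sum.cong refl arg_cong[where f="\<lambda>x. _ * x"] prod.cong) auto
qed

lemma keys_subset_vars: "m \<in> keys p \<Longrightarrow> keys m \<subseteq> vars p"
  unfolding vars_def by (rule UN_upper)

lemma vars_add: "vars (p + q) \<subseteq> vars p \<union> vars q"
  unfolding vars_def using keys_add[of p q] by blast

lemma vars_diff: "vars (p - q) \<subseteq> vars p \<union> vars q"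
  using vars_add[of p "- q"] by (simp add: vars_def)

lemma vars_mult: "vars (p * q) \<subseteq> vars p \<union> vars q"
proof
  fix i assume "i \<in> vars (p * q)"
  then obtain m where m: "m \<in> keys (p * q)" "i \<in> keys m" by (auto simp: vars_def)
  then obtain a b where "a \<in> keys p" "b \<in> keys q" "m = a + b"
    using keys_mult[of p q] by blast
  then show "i \<in> vars p \<union> vars q"
    using m(2) keys_add[of a b] keys_subset_vars[of a p] keys_subset_vars[of b q] by auto
qed

lemma vars_Const [simp]: "vars (Const c) = {}"
  by (simp add: vars_def Const_def)

lemma vars_Var [simp]: "vars (Var i) = {i}"
  by (simp add: vars_def Var_def)

lemma vars_single: "vars (single m c) \<subseteq> keys m"
  by (simp add: vars_def)

lemma vars_sum: "vars (\<Sum>i\<in>A. g i) \<subseteq> (\<Union>i\<in>A. vars (g i))"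
proof (induction A rule: infinite_finite_induct)
  case (insert x F)
  then show ?case using vars_add[of "g x" "sum g F"] by auto
qed (auto simp: vars_def)

lemma vars_prod: "vars (\<Prod>i\<in>A. g i) \<subseteq> (\<Union>i\<in>A. vars (g i))"
proof (induction A rule: infinite_finite_induct)
  case (insert x F)
  then show ?case using vars_mult[of "g x" "prod g F"] by auto
qed (auto simp: vars_def)

lemma vars_power: "vars (p ^ k) \<subseteq> vars p"
proof (induction k)
  case (Suc k)
  then show ?case using vars_mult[of p "p ^ k"] by auto
qed (simp add: vars_def)

lemma vars_subst: "vars (subst f p) \<subseteq> (\<Union>i\<in>vars p. vars (f i))"
proof -
  have "vars (subst f p) \<subseteq> (\<Union>m\<in>keys p. vars (Const (lookup p m) * eval_monom f m))"
    unfolding subst_eq_sum by (rule vars_sum)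
  also have "\<dots> \<subseteq> (\<Union>m\<in>keys p. vars (eval_monom f m))"
    using vars_mult[of "Const _" "eval_monom f _"] by auto
  also have "\<dots> \<subseteq> (\<Union>m\<in>keys p. \<Union>i\<in>keys m. vars (f i ^ lookup m i))"
    unfolding eval_monom_def by (rule UN_mono) (simp_all add: vars_prod)
  also have "\<dots> \<subseteq> (\<Union>m\<in>keys p. \<Union>i\<in>keys m. vars (f i))"
    by (intro UN_mono) (simp_all add: vars_power)
  also have "\<dots> = (\<Union>i\<in>vars p. vars (f i))"
    unfolding vars_def by (rule UN_UN_flatten[symmetric])
  finally show ?thesis .
qed

lemma subst_image_superset:
  assumes "\<And>v. v \<in> V \<Longrightarrow> Var v \<in> subst g ` {r. vars r \<subseteq> W}"
  shows "{q. vars q \<subseteq> V} \<subseteq> subst g ` {r. vars r \<subseteq> W}"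
proof
  fix q assume "q \<in> {q. vars q \<subseteq> V}"
  then have q: "vars q \<subseteq> V" by simp
  obtain h where h: "\<And>v. v \<in> V \<Longrightarrow> vars (h v) \<subseteq> W \<and> subst g (h v) = Var v"
    using assms by (auto simp: image_iff) metis
  have "subst g (subst h q) = subst (\<lambda>i. subst g (h i)) q"
    by (rule subst_subst)
  also have "\<dots> = subst Var q"
    by (rule subst_cong) (use h q in auto)
  finally have "subst g (subst h q) = q" by simp
  moreover have "vars (subst h q) \<subseteq> W"
    using vars_subst[of h q] h q by blast
  ultimately show "q \<in> subst g ` {r. vars r \<subseteq> W}" by (auto intro!: image_eqI)
qed

section \<open>The fundamental theorem of symmetric polynomials\<close>

lemma monom_less_iff:
  "(\<nu>::nat \<Rightarrow>\<^sub>0 nat) < \<mu> \<longleftrightarrow> (\<exists>k. lookup \<nu> k < lookup \<mu> k \<and> (\<forall>k'<k. lookup \<nu> k' = lookup \<mu> k'))"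
  by (simp add: less_poly_mapping.rep_eq less_fun_def)

definition set_monom :: "nat set \<Rightarrow> (nat \<Rightarrow>\<^sub>0 nat)" where
  "set_monom S = (\<Sum>i\<in>S. single i 1)"

lemma lookup_set_monom: "finite S \<Longrightarrow> lookup (set_monom S) i = (if i \<in> S then 1 else 0)"
  by (simp add: set_monom_def lookup_sum lookup_single when_def)

lemma set_monom_eq_iff:
  assumes "finite S" "finite T"
  shows "set_monom S = set_monom T \<longleftrightarrow> S = T"
proof
  assume eq: "set_monom S = set_monom T"
  have "i \<in> S \<longleftrightarrow> i \<in> T" for i
    using arg_cong[OF eq, of "\<lambda>m. lookup m i"] by (simp add: lookup_set_monom assms split: if_splits)
  then show "S = T" by auto
qed simp

lemma prod_Var_eq_single: "(\<Prod>i\<in>S. Var i) = single (set_monom S) 1"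
  by (simp add: Var_def prod_single_one set_monom_def)

lemma set_monom_less_initial_segment:
  assumes "finite S" "card S = j" "S \<noteq> {..<j}"
  shows "set_monom S < set_monom {..<j}"
proof -
  have "\<not> {..<j} \<subseteq> S"
  proof
    assume "{..<j} \<subseteq> S"
    then have "{..<j} = S" using card_subset_eq[OF assms(1)] assms(2) by simp
    with assms(3) show False by simp
  qed
  then have ex: "\<exists>k. k < j \<and> k \<notin> S" by auto
  define k where "k = (LEAST k. k < j \<and> k \<notin> S)"
  have k: "k < j" "k \<notin> S"
    using LeastI_ex[OF ex] unfolding k_def by auto
  have below: "k' \<in> S" if "k' < k" for k'
    using not_less_Least[of k' "\<lambda>k. k < j \<and> k \<notin> S"] that k unfolding k_def by auto
  show ?thesis unfolding monom_less_iff
    by (rule exI[of _ k]) (use k below assms(1) in \<open>simp add: lookup_set_monom\<close>)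
qed

definition subsets_card :: "nat \<Rightarrow> nat \<Rightarrow> nat set set" where
  "subsets_card n j = {S. S \<subseteq> {..<n} \<and> card S = j}"

lemma finite_subsets_card: "finite (subsets_card n j)"
  unfolding subsets_card_def by (rule finite_subset[of _ "Pow {..<n}"]) auto

lemma esym_eq_sum_single: "esym n j = (\<Sum>S\<in>subsets_card n j. single (set_monom S) 1)"
  by (simp add: esym_def subsets_card_def prod_Var_eq_single)

lemma vars_esym: "vars (esym n j) \<subseteq> {..<n}"
proof -
  have "vars (esym n j) \<subseteq> (\<Union>S\<in>subsets_card n j. vars (\<Prod>i\<in>S. Var i))"
    unfolding esym_def subsets_card_def by (rule vars_sum)
  also have "\<dots> \<subseteq> (\<Union>S\<in>subsets_card n j. \<Union>i\<in>S. vars (Var i))"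
    by (intro UN_mono order.refl vars_prod)
  finally show ?thesis by (auto simp: subsets_card_def)
qed

lemma esym_0: "esym n 0 = 1"
proof -
  have "subsets_card n 0 = {{}}"
    using finite_subset[of _ "{..<n}"] by (auto simp: subsets_card_def card_eq_0_iff)
  then show ?thesis by (simp add: esym_eq_sum_single set_monom_def)
qed

lemma esym_eq_0: "n < j \<Longrightarrow> esym n j = 0"
proof -
  assume "n < j"
  have "S \<notin> subsets_card n j" for S
  proof
    assume "S \<in> subsets_card n j"
    then have "card S \<le> n" "card S = j"
      using card_mono[OF finite_lessThan, of S n] by (auto simp: subsets_card_def)
    with \<open>n < j\<close> show False by simp
  qed
  then have "subsets_card n j = {}" by blast
  then show ?thesis by (simp add: esym_eq_sum_single)
qed

definition monoms_le :: "nat mpoly \<Rightarrow> (nat \<Rightarrow>\<^sub>0 nat) \<Rightarrow> bool" where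
  "monoms_le p \<mu> \<longleftrightarrow> (\<forall>\<kappa>\<in>keys p. \<kappa> \<le> \<mu>)"

lemma monoms_le_lookup_eq_0: "monoms_le p \<mu> \<Longrightarrow> \<mu> < \<nu> \<Longrightarrow> lookup p \<nu> = 0"
  unfolding monoms_le_def by (meson in_keys_iff leD)

lemma monoms_le_mult:
  assumes "monoms_le p \<mu>" "monoms_le q \<nu>"
  shows "monoms_le (p * q) (\<mu> + \<nu>)"
  unfolding monoms_le_def
proof
  fix \<kappa> assume "\<kappa> \<in> keys (p * q)"
  then obtain a b where "a \<in> keys p" "b \<in> keys q" "\<kappa> = a + b"
    using keys_mult[of p q] by blast
  then show "\<kappa> \<le> \<mu> + \<nu>" using assms unfolding monoms_le_def by (simp add: add_mono)
qed

lemma lookup_single_mult: "lookup (single \<mu> c * (q :: 'a mpoly)) (\<mu> + \<nu>) = c * lookup q \<nu>"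
proof -
  have "single \<mu> c * q = (\<Sum>b\<in>keys q. single (\<mu> + b) (c * lookup q b))"
    by (subst poly_mapping_eq_sum_single[of q]) (simp add: sum_distrib_left mult_single)
  then have "lookup (single \<mu> c * q) (\<mu> + \<nu>) = (\<Sum>b\<in>keys q. (c * lookup q b when b = \<nu>))"
    by (simp add: lookup_sum lookup_single)
  also have "\<dots> = c * lookup q \<nu>"
    by (cases "\<nu> \<in> keys q") (simp_all add: when_def in_keys_iff)
  finally show ?thesis .
qed

lemma lookup_mult_top:
  assumes "monoms_le p \<mu>" "monoms_le q \<nu>"
  shows "lookup (p * q) (\<mu> + \<nu>) = lookup p \<mu> * lookup q \<nu>"
proof -
  define p' where "p' = p - single \<mu> (lookup p \<mu>)"
  have p'_less: "\<kappa> < \<mu>" if "\<kappa> \<in> keys p'" for \<kappa>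
  proof -
    have "lookup p' \<kappa> \<noteq> 0" using that by (simp add: in_keys_iff)
    then have "\<kappa> \<noteq> \<mu>" "\<kappa> \<in> keys p"
      by (auto simp: p'_def lookup_minus lookup_single when_def in_keys_iff split: if_splits)
    then show ?thesis using assms(1) unfolding monoms_le_def by (simp add: order.not_eq_order_implies_strict)
  qed
  have "lookup (p' * q) (\<mu> + \<nu>) = 0"
  proof (rule ccontr)
    assume "lookup (p' * q) (\<mu> + \<nu>) \<noteq> 0"
    then obtain a b where ab: "a \<in> keys p'" "b \<in> keys q" "\<mu> + \<nu> = a + b"
      using keys_mult[of p' q] by (auto simp: in_keys_iff)
    have "a + b < \<mu> + \<nu>"
      using p'_less[OF ab(1)] ab(2) assms(2) unfolding monoms_le_def by (simp add: add_less_le_mono)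
    then show False using ab(3) by simp
  qed
  moreover have "p * q = single \<mu> (lookup p \<mu>) * q + p' * q"
    by (simp add: p'_def algebra_simps)
  ultimately show ?thesis by (simp add: lookup_add lookup_single_mult)
qed

lemma lead_prod:
  assumes "finite A" "\<And>j. j \<in> A \<Longrightarrow> monoms_le (f j) (\<mu> j)"
  shows "monoms_le (\<Prod>j\<in>A. f j) (\<Sum>j\<in>A. \<mu> j) \<and>
         lookup (\<Prod>j\<in>A. f j) (\<Sum>j\<in>A. \<mu> j) = (\<Prod>j\<in>A. lookup (f j) (\<mu> j))"
  using assms
proof (induction A rule: finite_induct)
  case empty
  then show ?case by (simp add: monoms_le_def)
next
  case (insert x F)
  then have "monoms_le (f x) (\<mu> x)" by simp
  with insert show ?case
    using monoms_le_mult[of "f x" "\<mu> x" "prod f F"] lookup_mult_top[of "f x" "\<mu> x" "prod f F"] by simp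
qed

lemma lead_esym:
  assumes "j \<le> n"
  shows "monoms_le (esym n j) (set_monom {..<j}) \<and> lookup (esym n j) (set_monom {..<j}) = 1"
proof
  have sets: "S \<in> subsets_card n j \<Longrightarrow> finite S \<and> card S = j" for S
    by (auto simp: subsets_card_def intro: finite_subset)
  show "monoms_le (esym n j) (set_monom {..<j})" unfolding monoms_le_def
  proof
    fix \<kappa> assume "\<kappa> \<in> keys (esym n j)"
    then have "\<kappa> \<in> (\<Union>S\<in>subsets_card n j. keys (single (set_monom S) (1::complex)))"
      unfolding esym_eq_sum_single by (rule subsetD[OF keys_sum])
    then obtain S where S: "S \<in> subsets_card n j" "\<kappa> = set_monom S" by auto
    then show "\<kappa> \<le> set_monom {..<j}"
      using set_monom_less_initial_segment[of S j] sets[of S] by (cases "S = {..<j}") auto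
  qed
  have "{..<j} \<in> subsets_card n j" using assms by (auto simp: subsets_card_def)
  then show "lookup (esym n j) (set_monom {..<j}) = 1"
    unfolding esym_eq_sum_single lookup_sum lookup_single
    using sets finite_subsets_card by (simp add: set_monom_eq_iff when_def)
qed

definition lead_esym_monom :: "(nat \<Rightarrow>\<^sub>0 nat) \<Rightarrow> (nat \<Rightarrow>\<^sub>0 nat)" where
  "lead_esym_monom a = (\<Sum>j\<in>keys a. \<Sum>r<lookup a j. set_monom {..<j})"

lemma lead_eval_monom_esym:
  assumes "keys a \<subseteq> {..n}"
  shows "monoms_le (eval_monom (esym n) a) (lead_esym_monom a) \<and>
         lookup (eval_monom (esym n) a) (lead_esym_monom a) = 1"
proof -
  have powers: "monoms_le (\<Prod>r<lookup a j. esym n j) (\<Sum>r<lookup a j. set_monom {..<j}) \<and>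
      lookup (\<Prod>r<lookup a j. esym n j) (\<Sum>r<lookup a j. set_monom {..<j}) = 1" if "j \<in> keys a" for j
  proof -
    have "j \<le> n" using that assms by auto
    then show ?thesis
      using lead_prod[of "{..<lookup a j}" "\<lambda>_. esym n j" "\<lambda>_. set_monom {..<j}"] lead_esym[of j n]
      by (simp del: prod_constant sum_constant)
  qed
  have "eval_monom (esym n) a = (\<Prod>j\<in>keys a. \<Prod>r<lookup a j. esym n j)"
    by (simp add: eval_monom_def)
  then show ?thesis
    using lead_prod[of "keys a" "\<lambda>j. \<Prod>r<lookup a j. esym n j" "\<lambda>j. \<Sum>r<lookup a j. set_monom {..<j}"]
      powers
    by (simp add: lead_esym_monom_def del: prod_constant sum_constant)
qed

lemma lookup_lead_esym_monom: "lookup (lead_esym_monom a) i = (\<Sum>j\<in>keys a. (lookup a j when i < j))"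
  unfolding lead_esym_monom_def lookup_sum
  by (intro sum.cong) (auto simp: when_def lookup_set_monom)

lemma lookup_lead_esym_monom_Suc:
  "lookup (lead_esym_monom a) i = lookup a (Suc i) + lookup (lead_esym_monom a) (Suc i)"
proof -
  have "(\<Sum>j\<in>keys a. (lookup a j when i < j)) =
      (\<Sum>j\<in>keys a. (lookup a j when j = Suc i) + (lookup a j when Suc i < j))"
    by (intro sum.cong) (auto simp: when_def)
  also have "\<dots> = (\<Sum>j\<in>keys a. (lookup a j when j = Suc i)) + (\<Sum>j\<in>keys a. (lookup a j when Suc i < j))"
    by (rule sum.distrib)
  also have "(\<Sum>j\<in>keys a. (lookup a j when j = Suc i)) = lookup a (Suc i)"
    by (cases "Suc i \<in> keys a") (simp_all add: when_def in_keys_iff)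
  finally show ?thesis by (simp add: lookup_lead_esym_monom)
qed

text \<open>Exponents of \<open>\<sigma>\<^sub>0 = 1\<close> are invisible in the leading monomial, hence the
  hypothesis on \<open>0\<close>.\<close>
lemma lead_esym_monom_inj:
  assumes "0 \<notin> keys a" "0 \<notin> keys b" "lead_esym_monom a = lead_esym_monom b"
  shows "a = b"
proof (rule poly_mapping_eqI)
  fix k show "lookup a k = lookup b k"
  proof (cases k)
    case 0 then show ?thesis using assms(1,2) by (simp add: in_keys_iff)
  next
    case (Suc i)
    then show ?thesis
      using lookup_lead_esym_monom_Suc[of a i] lookup_lead_esym_monom_Suc[of b i] assms(3) by simp
  qed
qed

lemma subst_esym_eq_0_imp:
  assumes "vars r \<subseteq> {1..n}" "subst (esym n) r = 0"
  shows "r = 0"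
proof (rule ccontr)
  assume "r \<noteq> 0"
  define L where "L = Max (lead_esym_monom ` keys r)"
  have "L \<in> lead_esym_monom ` keys r"
    unfolding L_def using \<open>r \<noteq> 0\<close> by (intro Max_in) auto
  then obtain a where a: "a \<in> keys r" "lead_esym_monom a = L" by auto
  have keys_r: "0 \<notin> keys b \<and> keys b \<subseteq> {..n}" if "b \<in> keys r" for b
  proof -
    have "keys b \<subseteq> {1..n}" using keys_subset_vars[OF that] assms(1) by (rule order.trans)
    then show ?thesis by auto
  qed
  have others: "lookup (eval_monom (esym n) b) L = 0" if "b \<in> keys r" "b \<noteq> a" for b
  proof -
    have "lead_esym_monom b \<le> L" unfolding L_def using that(1) by (intro Max_ge) auto
    moreover have "lead_esym_monom b \<noteq> L"
      using lead_esym_monom_inj[of b a] keys_r[OF that(1)] keys_r[OF a(1)] a(2) that(2) by auto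
    ultimately have "lead_esym_monom b < L" by simp
    then show ?thesis
      using lead_eval_monom_esym[of b n] keys_r[OF that(1)] monoms_le_lookup_eq_0 by blast
  qed
  have "lookup (subst (esym n) r) L = (\<Sum>b\<in>keys r. lookup r b * lookup (eval_monom (esym n) b) L)"
    unfolding subst_eq_sum lookup_sum lookup_Const_mult ..
  also have "\<dots> = lookup r a * lookup (eval_monom (esym n) a) L"
    using a(1) others by (simp add: sum.remove)
  also have "\<dots> = lookup r a"
    using lead_eval_monom_esym[of a n] keys_r[OF a(1)] a(2) by simp
  finally show False using assms(2) a(1) by (simp add: in_keys_iff)
qed

lemma inj_on_subst_esym: "inj_on (subst (esym n)) {r. vars r \<subseteq> {1..n}}"
proof (rule inj_onI)
  fix r s assume "r \<in> {r. vars r \<subseteq> {1..n}}" "s \<in> {r. vars r \<subseteq> {1..n}}"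
    and "subst (esym n) r = subst (esym n) s"
  then have "vars (r - s) \<subseteq> {1..n}" "subst (esym n) (r - s) = 0"
    using vars_diff[of r s] by (auto simp: subst_diff)
  then have "r - s = 0" by (rule subst_esym_eq_0_imp)
  then show "r = s" by simp
qed

definition permute_monom :: "(nat \<Rightarrow> nat) \<Rightarrow> (nat \<Rightarrow>\<^sub>0 nat) \<Rightarrow> (nat \<Rightarrow>\<^sub>0 nat)" where
  "permute_monom \<pi> m = (\<Sum>i\<in>keys m. single (\<pi> i) (lookup m i))"

lemma lookup_permute_monom:
  assumes "bij \<pi>"
  shows "lookup (permute_monom \<pi> m) k = lookup m (inv \<pi> k)"
proof -
  have "lookup (permute_monom \<pi> m) k = (\<Sum>i\<in>keys m. (lookup m i when i = inv \<pi> k))"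
    unfolding permute_monom_def lookup_sum lookup_single
    using assms by (simp add: bij_inv_eq_iff eq_commute[of k])
  also have "\<dots> = lookup m (inv \<pi> k)"
    by (cases "inv \<pi> k \<in> keys m") (simp_all add: when_def in_keys_iff)
  finally show ?thesis .
qed

lemma lookup_subst_permute:
  assumes "bij \<pi>"
  shows "lookup (subst (\<lambda>i. Var (\<pi> i)) p) (permute_monom \<pi> \<mu>) = lookup p \<mu>"
proof -
  have inj: "inj (permute_monom \<pi>)"
    using assms by (intro injI poly_mapping_eqI) (metis bij_inv_eq_iff lookup_permute_monom)
  have "eval_monom (\<lambda>i. Var (\<pi> i)) m = single (permute_monom \<pi> m) 1" for m
    unfolding eval_monom_def permute_monom_def Var_power by (rule prod_single_one)
  then have "subst (\<lambda>i. Var (\<pi> i)) p = (\<Sum>m\<in>keys p. single (permute_monom \<pi> m) (lookup p m))"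
    by (simp add: subst_eq_sum Const_def mult_single)
  then have "lookup (subst (\<lambda>i. Var (\<pi> i)) p) (permute_monom \<pi> \<mu>) =
      (\<Sum>m\<in>keys p. (lookup p m when m = \<mu>))"
    using inj by (simp add: lookup_sum lookup_single inj_eq)
  also have "\<dots> = lookup p \<mu>"
    by (cases "\<mu> \<in> keys p") (simp_all add: when_def in_keys_iff)
  finally show ?thesis .
qed

lemma subst_permute_esym:
  assumes "\<pi> permutes {..<n}"
  shows "subst (\<lambda>i. Var (\<pi> i)) (esym n j) = esym n j"
proof -
  have inv: "inv \<pi> permutes {..<n}" by (rule permutes_inv[OF assms])
  have inj: "inj_on \<pi> S" "inj_on (inv \<pi>) S" for S
    using permutes_inj[OF assms] permutes_inj[OF inv] by (auto intro: inj_on_subset)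
  have less_n: "\<pi> i < n" "inv \<pi> i < n" if "i < n" for i
    using that permutes_in_image[OF assms] permutes_in_image[OF inv] by auto
  have "bij_betw ((`) \<pi>) (subsets_card n j) (subsets_card n j)"
    unfolding subsets_card_def
    by (rule bij_betwI[where g="(`) (inv \<pi>)"])
       (use assms in \<open>auto simp: card_image inj image_comp permutes_inverses
          intro!: less_n\<close>)
  then have "(\<Sum>S\<in>subsets_card n j. \<Prod>i\<in>\<pi> ` S. Var i) = esym n j"
    unfolding esym_def subsets_card_def[symmetric] by (rule sum.reindex_bij_betw)
  then show ?thesis
    by (simp add: esym_def subsets_card_def[symmetric] subst_sum subst_prod prod.reindex inj)
qed

lemma subst_esym_in_sym_polys: "subst (esym n) r \<in> sym_polys n"
  unfolding sym_polys_def
proof (intro CollectI conjI allI impI)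
  show "vars (subst (esym n) r) \<subseteq> {..<n}"
    using vars_subst[of "esym n" r] vars_esym by blast
  fix \<pi> :: "nat \<Rightarrow> nat" assume "\<pi> permutes {..<n}"
  then show "subst (\<lambda>i. Var (\<pi> i)) (subst (esym n) r) = subst (esym n) r"
    by (simp add: subst_subst subst_permute_esym)
qed

lemma sym_polys_diff: "p \<in> sym_polys n \<Longrightarrow> q \<in> sym_polys n \<Longrightarrow> p - q \<in> sym_polys n"
  unfolding sym_polys_def using vars_diff[of p q] by (auto simp: subst_diff)

lemma sym_polys_keys_less: "p \<in> sym_polys n \<Longrightarrow> \<mu> \<in> keys p \<Longrightarrow> keys \<mu> \<subseteq> {..<n}"
  unfolding sym_polys_def using keys_subset_vars by blast

text \<open>The largest monomial of a symmetric polynomial is weakly decreasing: otherwise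
  swapping two adjacent variables would produce a larger one.\<close>
lemma sym_polys_Max_antimono:
  assumes p: "p \<in> sym_polys n" and "p \<noteq> 0"
  shows "lookup (Max (keys p)) (Suc i) \<le> lookup (Max (keys p)) i"
proof (rule ccontr)
  define \<mu> where "\<mu> = Max (keys p)"
  have \<mu>: "\<mu> \<in> keys p" using \<open>p \<noteq> 0\<close> unfolding \<mu>_def by (intro Max_in) auto
  assume "\<not> lookup (Max (keys p)) (Suc i) \<le> lookup (Max (keys p)) i"
  then have less: "lookup \<mu> i < lookup \<mu> (Suc i)" unfolding \<mu>_def by simp
  then have "Suc i \<in> keys \<mu>" by (simp add: in_keys_iff)
  then have "Suc i < n" using sym_polys_keys_less[OF p \<mu>] by blast
  define \<pi> where "\<pi> = Transposition.transpose i (Suc i)"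
  have perm: "\<pi> permutes {..<n}"
    unfolding \<pi>_def using \<open>Suc i < n\<close> by (intro permutes_swap_id) auto
  have bij: "bij \<pi>" by (rule permutes_bij[OF perm])
  define \<nu> where "\<nu> = permute_monom \<pi> \<mu>"
  have "inv \<pi> = \<pi>" unfolding \<pi>_def by (rule inv_transpose_eq)
  then have lookup_\<nu>: "lookup \<nu> k = lookup \<mu> (\<pi> k)" for k
    unfolding \<nu>_def by (simp add: lookup_permute_monom[OF bij])
  have "lookup p \<nu> = lookup (subst (\<lambda>i. Var (\<pi> i)) p) \<nu>"
    using p perm unfolding sym_polys_def by simp
  also have "\<dots> = lookup p \<mu>" unfolding \<nu>_def by (rule lookup_subst_permute[OF bij])
  finally have "\<nu> \<le> \<mu>" using \<mu> unfolding \<mu>_def by (simp add: in_keys_iff)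
  moreover have "\<mu> < \<nu>" unfolding monom_less_iff
    by (rule exI[of _ i]) (use less in \<open>simp add: lookup_\<nu> \<pi>_def transpose_apply_other\<close>)
  ultimately show False by simp
qed

text \<open>The exponents \<open>a\<close> for which \<open>\<sigma>\<^sub>1\<^bsup>a\<^sub>1\<^esup> \<dots> \<sigma>\<^sub>n\<^bsup>a\<^sub>n\<^esup>\<close> has leading
  monomial \<open>\<mu>\<close>.\<close>
definition esym_exponents :: "nat \<Rightarrow> (nat \<Rightarrow>\<^sub>0 nat) \<Rightarrow> (nat \<Rightarrow>\<^sub>0 nat)" where
  "esym_exponents n \<mu> = (\<Sum>j\<in>{1..n}. single j (lookup \<mu> (j - 1) - lookup \<mu> j))"

lemma lookup_esym_exponents:
  "lookup (esym_exponents n \<mu>) j = (if j \<in> {1..n} then lookup \<mu> (j - 1) - lookup \<mu> j else 0)"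
  unfolding esym_exponents_def lookup_sum lookup_single by (simp add: when_def)

lemma keys_esym_exponents: "keys (esym_exponents n \<mu>) \<subseteq> {1..n}"
  by (auto simp: in_keys_iff lookup_esym_exponents split: if_splits)

lemma lead_esym_monom_esym_exponents:
  assumes antimono: "\<And>i. lookup \<mu> (Suc i) \<le> lookup \<mu> i" and keys: "keys \<mu> \<subseteq> {..<n}"
  shows "lead_esym_monom (esym_exponents n \<mu>) = \<mu>"
proof (rule poly_mapping_eqI)
  fix i
  show "lookup (lead_esym_monom (esym_exponents n \<mu>)) i = lookup \<mu> i"
  proof (induction "n - i" arbitrary: i)
    case 0
    then have "lookup (lead_esym_monom (esym_exponents n \<mu>)) i = 0"
      using keys_esym_exponents[of n \<mu>]
      by (force simp: lookup_lead_esym_monom when_def intro: sum.neutral)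
    moreover have "lookup \<mu> i = 0" using keys 0 by (auto simp: in_keys_iff)
    ultimately show ?case by simp
  next
    case (Suc d)
    then have "i < n" "lookup (lead_esym_monom (esym_exponents n \<mu>)) (Suc i) = lookup \<mu> (Suc i)"
      by auto
    then show ?case
      using lookup_lead_esym_monom_Suc[of "esym_exponents n \<mu>" i] antimono[of i]
      by (simp add: lookup_esym_exponents)
  qed
qed

lemma monom_less_imp_lex:
  assumes "\<nu> < \<mu>" "keys \<mu> \<subseteq> {..<n}"
  shows "(map (lookup \<nu>) [0..<n], map (lookup \<mu>) [0..<n]) \<in> lex less_than"
proof -
  obtain k where k: "lookup \<nu> k < lookup \<mu> k" "\<forall>k'<k. lookup \<nu> k' = lookup \<mu> k'"
    using assms(1) unfolding monom_less_iff by auto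
  then have "k \<in> keys \<mu>" by (simp add: in_keys_iff)
  then have "k < n" using assms(2) by blast
  then have split: "[0..<n] = [0..<k] @ k # [Suc k..<n]"
    using upt_add_eq_append[of 0 k "n - k"] upt_conv_Cons[of k n] by simp
  have "(map (lookup \<mu>) [0..<k] @ lookup \<nu> k # map (lookup \<nu>) [Suc k..<n],
         map (lookup \<mu>) [0..<k] @ lookup \<mu> k # map (lookup \<mu>) [Suc k..<n]) \<in> lex less_than"
    using k(1) by (intro lex_append_leftI) simp
  moreover have "map (lookup \<nu>) [0..<k] = map (lookup \<mu>) [0..<k]" using k(2) by simp
  ultimately show ?thesis by (simp only: split map_append list.map)
qed

lemma sym_polys_reduce:
  assumes p: "p \<in> sym_polys n" and "p \<noteq> 0"
  obtains q where "vars q \<subseteq> {1..n}" "p - subst (esym n) q \<in> sym_polys n"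
    "\<And>\<kappa>. \<kappa> \<in> keys (p - subst (esym n) q) \<Longrightarrow> \<kappa> < Max (keys p)"
proof
  define \<mu> where "\<mu> = Max (keys p)"
  have \<mu>: "\<mu> \<in> keys p" using \<open>p \<noteq> 0\<close> unfolding \<mu>_def by (intro Max_in) auto
  define a where "a = esym_exponents n \<mu>"
  have a_keys: "keys a \<subseteq> {1..n}"
    unfolding a_def by (rule keys_esym_exponents)
  have "lead_esym_monom a = \<mu>"
    unfolding a_def \<mu>_def
    by (rule lead_esym_monom_esym_exponents[OF sym_polys_Max_antimono[OF assms]
          sym_polys_keys_less[OF p]]) (use \<mu> in \<open>simp add: \<mu>_def\<close>)
  then have lead: "monoms_le (eval_monom (esym n) a) \<mu> \<and> lookup (eval_monom (esym n) a) \<mu> = 1"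
    using lead_eval_monom_esym[of a n] a_keys by fastforce
  define q where "q = single a (lookup p \<mu>)"
  show "vars q \<subseteq> {1..n}"
    unfolding q_def using vars_single a_keys by (rule order.trans)
  show "p - subst (esym n) q \<in> sym_polys n"
    using p subst_esym_in_sym_polys by (rule sym_polys_diff)
  fix \<kappa> assume "\<kappa> \<in> keys (p - subst (esym n) q)"
  then have nz: "lookup p \<kappa> - lookup p \<mu> * lookup (eval_monom (esym n) a) \<kappa> \<noteq> 0"
    by (simp add: q_def subst_single lookup_minus lookup_Const_mult in_keys_iff)
  then have "\<kappa> \<in> keys p \<or> \<kappa> \<in> keys (eval_monom (esym n) a)"
    by (auto simp: in_keys_iff)
  then have "\<kappa> \<le> \<mu>" using lead unfolding \<mu>_def monoms_le_def by auto
  moreover have "\<kappa> \<noteq> \<mu>" using nz lead by auto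
  ultimately show "\<kappa> < Max (keys p)" unfolding \<mu>_def by simp
qed

lemma sym_polys_subset_subst_esym:
  "sym_polys n \<subseteq> subst (esym n) ` {r. vars r \<subseteq> {1..n}}"
proof
  fix p assume "p \<in> sym_polys n"
  then show "p \<in> subst (esym n) ` {r. vars r \<subseteq> {1..n}}"
  proof (induction p rule: wf_induct_rule[OF
        wf_inv_image[OF wf_lex[OF wf_less_than], of "\<lambda>p. map (lookup (Max (keys p))) [0..<n]"]])
    case (1 p)
    show ?case
    proof (cases "p = 0")
      case True
      then show ?thesis by (auto intro!: image_eqI[of _ _ 0] simp: vars_def)
    next
      case False
      then obtain q where q: "vars q \<subseteq> {1..n}" and p': "p - subst (esym n) q \<in> sym_polys n"
        and less: "\<And>\<kappa>. \<kappa> \<in> keys (p - subst (esym n) q) \<Longrightarrow> \<kappa> < Max (keys p)"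
        using sym_polys_reduce[OF "1.prems"] by blast
      define p' where "p' = p - subst (esym n) q"
      obtain r where r: "vars r \<subseteq> {1..n}" "subst (esym n) r = p'"
      proof (cases "p' = 0")
        case True
        then show ?thesis by (intro that[of 0]) (auto simp: vars_def)
      next
        case False
        then have "Max (keys p') \<in> keys p'" by (intro Max_in) auto
        then have "(map (lookup (Max (keys p'))) [0..<n], map (lookup (Max (keys p))) [0..<n])
            \<in> lex less_than"
          using less sym_polys_keys_less[OF "1.prems"] \<open>p \<noteq> 0\<close> unfolding p'_def
          by (intro monom_less_imp_lex) auto
        then show ?thesis using "1.IH"[of p'] p' that unfolding p'_def by auto
      qed
      then have "subst (esym n) (r + q) = p" by (simp add: subst_add p'_def)
      moreover have "vars (r + q) \<subseteq> {1..n}" using vars_add[of r q] r(1) q by auto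
      ultimately show ?thesis by blast
    qed
  qed
qed

lemma subst_esym_image: "subst (esym n) ` {r. vars r \<subseteq> {1..n}} = sym_polys n"
  using sym_polys_subset_subst_esym subst_esym_in_sym_polys by blast

section \<open>Generating series\<close>

lemma esym_Suc: "esym (Suc n) (Suc j) = esym n (Suc j) + Var n * esym n j"
proof -
  have below_n: "n \<notin> S \<and> finite S" if "S \<subseteq> {..<n}" for S
    using that finite_subset by blast
  have split: "subsets_card (Suc n) (Suc j) = subsets_card n (Suc j) \<union> insert n ` subsets_card n j"
  proof (intro set_eqI iffI)
    fix S assume S: "S \<in> subsets_card (Suc n) (Suc j)"
    show "S \<in> subsets_card n (Suc j) \<union> insert n ` subsets_card n j"
    proof (cases "n \<in> S")
      case True
      have "finite S" using S finite_subset by (auto simp: subsets_card_def)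
      then have "S - {n} \<in> subsets_card n j" "S = insert n (S - {n})"
        using S True by (auto simp: subsets_card_def less_Suc_eq)
      then show ?thesis by blast
    next
      case False
      then show ?thesis using S by (auto simp: subsets_card_def less_Suc_eq)
    qed
  next
    fix S assume "S \<in> subsets_card n (Suc j) \<union> insert n ` subsets_card n j"
    then show "S \<in> subsets_card (Suc n) (Suc j)"
      by (auto simp: subsets_card_def dest: below_n)
  qed
  have "inj_on (insert n) (subsets_card n j)"
    by (rule inj_onI) (metis Diff_insert_absorb below_n mem_Collect_eq subsets_card_def)
  moreover have "subsets_card n (Suc j) \<inter> insert n ` subsets_card n j = {}"
    using below_n by (auto simp: subsets_card_def)
  ultimately show ?thesis
    unfolding esym_def subsets_card_def[symmetric] split
    by (simp add: sum.union_disjoint finite_subsets_card sum.reindex sum_distrib_left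
        below_n subsets_card_def)
qed

definition phi_fps :: "nat \<Rightarrow> nat \<Rightarrow> nat mpoly fps" where
  "phi_fps n i = Abs_fps (\<lambda>k. phi n k i)"

definition z_fps :: "nat \<Rightarrow> nat mpoly fps" where
  "z_fps n = (\<Sum>i<n. fps_const (Var i) * phi_fps n i)"

definition esym_even_fps :: "nat \<Rightarrow> nat mpoly fps" where
  "esym_even_fps n = Abs_fps (\<lambda>j. if even j then esym n j else 0)"

definition esym_odd_fps :: "nat \<Rightarrow> nat mpoly fps" where
  "esym_odd_fps n = Abs_fps (\<lambda>j. if odd j then esym n j else 0)"

lemma esym_even_fps_Suc:
  "esym_even_fps (Suc n) = esym_even_fps n + fps_X * fps_const (Var n) * esym_odd_fps n" (is "?l = ?r")
proof (rule fps_ext)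
  show "fps_nth ?l k = fps_nth ?r k" for k
    by (cases k) (simp_all add: esym_even_fps_def esym_odd_fps_def esym_0 esym_Suc mult.assoc)
qed

lemma esym_odd_fps_Suc:
  "esym_odd_fps (Suc n) = esym_odd_fps n + fps_X * fps_const (Var n) * esym_even_fps n" (is "?l = ?r")
proof (rule fps_ext)
  show "fps_nth ?l k = fps_nth ?r k" for k
    by (cases k) (simp_all add: esym_even_fps_def esym_odd_fps_def esym_0 esym_Suc mult.assoc)
qed

lemma esym_odd_fps_0: "esym_odd_fps 0 = 0" (is "?l = ?r")
proof (rule fps_ext)
  show "fps_nth ?l k = fps_nth ?r k" for k
    by (cases k) (simp_all add: esym_odd_fps_def esym_eq_0)
qed

lemma phi_fps_eq: "phi_fps n i = 1 + fps_X * (\<Sum>j<n. fps_const (tT i j) * phi_fps n j)" (is "?l = ?r")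
proof (rule fps_ext)
  show "fps_nth ?l k = fps_nth ?r k" for k
    by (cases k) (simp_all add: phi_fps_def phi_def Tmap_def fps_sum_nth)
qed

lemma fps_linear_system_eq_0:
  fixes C :: "'i \<Rightarrow> 'a::comm_ring_1 fps"
  assumes "\<And>i. i \<in> I \<Longrightarrow> C i = fps_X * (\<Sum>j\<in>I. fps_const (t i j) * C j)" and "i \<in> I"
  shows "C i = 0"
proof -
  have "\<forall>i\<in>I. fps_nth (C i) k = 0" for k
  proof (induction k)
    case 0
    show ?case
    proof
      fix i assume "i \<in> I"
      then show "fps_nth (C i) 0 = 0" by (subst assms(1)) simp_all
    qed
  next
    case (Suc k)
    show ?case
    proof
      fix i assume "i \<in> I"
      then show "fps_nth (C i) (Suc k) = 0" using Suc by (subst assms(1)) (simp_all add: fps_sum_nth)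
    qed
  qed
  then show ?thesis using assms(2) by (intro fps_ext) simp
qed

text \<open>Adding the variable \<open>x\<^sub>n\<close> multiplies the old solution \<open>\<Phi>\<^sub>i\<close>, \<open>i < n\<close>, by a
  common factor, because \<open>t\<^sub>i\<^sub>n = x\<^sub>n\<close> for all \<open>i < n\<close>.\<close>
lemma phi_fps_Suc:
  assumes "i < n"
  shows "phi_fps (Suc n) i = (1 + fps_X * fps_const (Var n) * phi_fps (Suc n) n) * phi_fps n i"
proof -
  define u where "u = 1 + fps_X * fps_const (Var n) * phi_fps (Suc n) n"
  define C where "C i = phi_fps (Suc n) i - u * phi_fps n i" for i
  have "C i = fps_X * (\<Sum>j<n. fps_const (tT i j) * C j)" if "i < n" for i
  proof -
    have "tT i n = Var n" using that by (simp add: tT_def)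
    then have "C i = fps_X * ((\<Sum>j<n. fps_const (tT i j) * phi_fps (Suc n) j)
                            - (\<Sum>j<n. fps_const (tT i j) * (u * phi_fps n j)))"
      unfolding C_def u_def
      by (subst phi_fps_eq, subst (2) phi_fps_eq) (simp add: sum_distrib_left algebra_simps)
    then show ?thesis
      by (simp add: C_def sum_subtractf right_diff_distrib)
  qed
  then have "C i = 0" by (rule fps_linear_system_eq_0) (use assms in simp_all)
  then show ?thesis by (simp add: C_def u_def)
qed

lemma phi_fps_Suc_last:
  "phi_fps (Suc n) n = 1 - (1 + fps_X * fps_const (Var n) * phi_fps (Suc n) n) * (fps_X * z_fps n)"
proof -
  define u where "u = 1 + fps_X * fps_const (Var n) * phi_fps (Suc n) n"
  have "(\<Sum>j<n. fps_const (tT n j) * phi_fps (Suc n) j) = (\<Sum>j<n. - (u * (fps_const (Var j) * phi_fps n j)))"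
  proof (intro sum.cong refl)
    fix j assume "j \<in> {..<n}"
    then have "fps_const (tT n j) = - fps_const (Var j)" "phi_fps (Suc n) j = u * phi_fps n j"
      by (simp_all add: tT_def phi_fps_Suc u_def)
    then show "fps_const (tT n j) * phi_fps (Suc n) j = - (u * (fps_const (Var j) * phi_fps n j))"
      by (simp only: mult_minus_left mult_minus_right mult.commute mult.left_commute)
  qed
  also have "\<dots> = - (u * z_fps n)" by (simp add: z_fps_def sum_negf sum_distrib_left)
  finally have "(\<Sum>j<n. fps_const (tT n j) * phi_fps (Suc n) j) = - (u * z_fps n)" .
  moreover have "phi_fps (Suc n) n = 1 + fps_X * (\<Sum>j<n. fps_const (tT n j) * phi_fps (Suc n) j)"
    by (subst phi_fps_eq) (simp add: tT_def)
  ultimately have "phi_fps (Suc n) n = 1 - u * (fps_X * z_fps n)" by (simp add: algebra_simps)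
  then show ?thesis by (simp only: u_def)
qed

lemma z_fps_Suc:
  "z_fps (Suc n) = (1 + fps_X * fps_const (Var n) * phi_fps (Suc n) n) * z_fps n
                   + fps_const (Var n) * phi_fps (Suc n) n"
proof -
  define u where "u = 1 + fps_X * fps_const (Var n) * phi_fps (Suc n) n"
  have "(\<Sum>i<n. fps_const (Var i) * phi_fps (Suc n) i) = (\<Sum>i<n. u * (fps_const (Var i) * phi_fps n i))"
    by (intro sum.cong refl) (simp add: phi_fps_Suc u_def mult.left_commute)
  then show ?thesis by (simp add: z_fps_def sum_distrib_left u_def)
qed

lemma esym_even_fps_z_fps: "esym_even_fps n * (fps_X * z_fps n) = esym_odd_fps n"
proof (induction n)
  case 0
  then show ?case by (simp add: z_fps_def esym_odd_fps_0)
next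
  case (Suc n)
  define a where "a = fps_X * fps_const (Var n)"
  define w where "w = phi_fps (Suc n) n"
  define u where "u = 1 + a * w"
  define Ev where "Ev = esym_even_fps n"
  define Od where "Od = esym_odd_fps n"
  define Y where "Y = fps_X * z_fps n"
  have IH: "Ev * Y = Od" using Suc by (simp add: Ev_def Y_def Od_def)
  have w: "w = 1 - u * Y"
    using phi_fps_Suc_last[of n] by (simp add: w_def u_def a_def Y_def)
  have "fps_X * z_fps (Suc n) = u * Y + a * w"
    using z_fps_Suc[of n] by (simp add: w_def u_def a_def Y_def algebra_simps)
  moreover have "(Ev + a * Od) * (u * Y + a * w) = Od + a * Ev"
  proof -
    have "(Ev + a * Od) * (u * Y + a * w) = u * (Ev * Y) + a * Od * (u * Y) + a * (w * Ev) + a * a * w * Od"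
      by (simp add: algebra_simps)
    also have "\<dots> = u * Od + a * Od * (1 - w) + a * (Ev - u * Od) + a * a * w * Od"
    proof -
      have "u * Y = 1 - w" using w by (simp add: algebra_simps)
      moreover have "w * Ev = Ev - u * Od"
      proof -
        have "w * Ev = (1 - u * Y) * Ev" using w by simp
        also have "\<dots> = Ev - u * (Ev * Y)" by (simp add: algebra_simps)
        finally show ?thesis using IH by simp
      qed
      ultimately show ?thesis using IH by simp
    qed
    also have "\<dots> = Od + a * Ev"
      by (simp add: u_def algebra_simps)
    finally show ?thesis .
  qed
  ultimately show ?case
    by (simp add: esym_even_fps_Suc esym_odd_fps_Suc Ev_def Od_def a_def)
qed

lemma zz_eq_sum: "zz n k = (\<Sum>i<n. Var i * phi n k i)"
proof -
  have half: "Const (1/2) * (2 :: nat mpoly) = 1"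
    unfolding numeral_eq_Const Const_mult[symmetric] by simp
  have "zz n k = (\<Sum>i<n. (Const (1/2) * 2) * (phi n k i * Var i))"
    unfolding zz_def anticomm_def sum_distrib_left by (simp add: phi_def mult.assoc)
  then show ?thesis unfolding half by (simp add: mult.commute)
qed

lemma z_fps_nth: "fps_nth (z_fps n) k = zz n k"
  by (simp add: z_fps_def fps_sum_nth zz_eq_sum phi_fps_def)

lemma sum_atMost_odd_vanishing:
  fixes f :: "nat \<Rightarrow> 'a::comm_monoid_add"
  assumes "\<And>i. odd i \<Longrightarrow> f i = 0"
  shows "(\<Sum>i\<le>2*k+1. f i) = (\<Sum>j\<le>k. f (2*j))"
proof (induction k)
  case 0
  then show ?case using assms[of 1] by (simp add: atMost_Suc)
next
  case (Suc k)
  have "(\<Sum>i\<le>2 * Suc k + 1. f i) = (\<Sum>i\<le>2*k+1. f i) + f (2*k+2) + f (2*k+3)"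
    by (simp add: atMost_Suc add_ac eval_nat_numeral)
  moreover have "(\<Sum>j\<le>Suc k. f (2*j)) = (\<Sum>j\<le>k. f (2*j)) + f (2*k+2)"
    by (simp add: atMost_Suc add_ac)
  ultimately show ?case using Suc.IH assms[of "2*k+3"] by simp
qed

lemma esym_odd_eq_sum: "esym n (2*k+1) = (\<Sum>j\<le>k. esym n (2*j) * zz n (2*k - 2*j))"
proof -
  have "esym n (2*k+1) = fps_nth (esym_even_fps n * (fps_X * z_fps n)) (2*k+1)"
    by (simp add: esym_even_fps_z_fps esym_odd_fps_def)
  also have "\<dots> = (\<Sum>i\<le>2*k+1. fps_nth (esym_even_fps n) i * fps_nth (fps_X * z_fps n) (2*k+1 - i))"
    by (simp add: fps_mult_nth atLeast0AtMost)
  also have "\<dots> = (\<Sum>j\<le>k. fps_nth (esym_even_fps n) (2*j) * fps_nth (fps_X * z_fps n) (2*k+1 - 2*j))"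
    by (rule sum_atMost_odd_vanishing) (simp add: esym_even_fps_def)
  also have "\<dots> = (\<Sum>j\<le>k. esym n (2*j) * zz n (2*k - 2*j))"
  proof (intro sum.cong refl)
    fix j assume "j \<in> {..k}"
    then have "2*k+1 - 2*j = Suc (2*k - 2*j)" by auto
    then show "fps_nth (esym_even_fps n) (2*j) * fps_nth (fps_X * z_fps n) (2*k+1 - 2*j)
        = esym n (2*j) * zz n (2*k - 2*j)"
      by (simp add: esym_even_fps_def z_fps_nth)
  qed
  finally show ?thesis .
qed

section \<open>The change of generators\<close>

definition gens :: "nat \<Rightarrow> nat + nat \<Rightarrow> nat mpoly" where
  "gens n = (\<lambda>v. case v of Inl k \<Rightarrow> zz n (2*k) | Inr k \<Rightarrow> esym n (2*k))"

definition gen_vars :: "nat \<Rightarrow> (nat + nat) set" where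
  "gen_vars n = Inl ` {0..(n-1) div 2} \<union> Inr ` {1..n div 2}"

text \<open>\<open>\<sigma>\<^sub>j\<close> as a polynomial in the generators, read off from \<open>esym_odd_eq_sum\<close>.\<close>
definition esym_via_gens :: "nat \<Rightarrow> (nat + nat) mpoly" where
  "esym_via_gens j = (if even j then Var (Inr (j div 2))
     else Var (Inl (j div 2)) + (\<Sum>i\<in>{1..j div 2}. Var (Inr i) * Var (Inl (j div 2 - i))))"

lemma subst_gens_esym_via_gens: "subst (gens n) (esym_via_gens j) = esym n j"
proof (cases "even j")
  case True
  then show ?thesis by (simp add: esym_via_gens_def gens_def)
next
  case False
  define k where "k = j div 2"
  have j: "j = 2*k+1" using False unfolding k_def by presburger
  have "subst (gens n) (esym_via_gens j) = zz n (2*k) + (\<Sum>i\<in>{1..k}. esym n (2*i) * zz n (2*(k-i)))"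
    using False unfolding esym_via_gens_def k_def[symmetric]
    by (simp add: subst_add subst_sum subst_mult gens_def)
  also have "\<dots> = (\<Sum>i\<le>k. esym n (2*i) * zz n (2*k - 2*i))"
  proof -
    have "{..k} = insert 0 {1..k}" by auto
    then show ?thesis by (simp add: esym_0 diff_mult_distrib2)
  qed
  also have "\<dots> = esym n j" using esym_odd_eq_sum[of n k] j by simp
  finally show ?thesis .
qed

lemma subst_gens_subst_esym_via_gens: "subst (gens n) (subst esym_via_gens r) = subst (esym n) r"
  by (simp add: subst_subst subst_gens_esym_via_gens)

lemma vars_esym_via_gens:
  assumes "j \<in> {1..n}"
  shows "vars (esym_via_gens j) \<subseteq> gen_vars n"
proof (cases "even j")
  case True
  then have "j div 2 \<in> {1..n div 2}" using assms by (auto elim!: evenE)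
  then show ?thesis using True by (simp add: esym_via_gens_def gen_vars_def)
next
  case False
  define k where "k = j div 2"
  have "j = 2*k+1" using False unfolding k_def by presburger
  then have k: "k \<le> (n-1) div 2" "(n-1) div 2 \<le> n div 2" using assms by (auto intro: div_le_mono)
  have summand: "vars (Var (Inr i) * Var (Inl (k - i)) :: (nat + nat) mpoly) \<subseteq> gen_vars n"
    if "i \<in> {1..k}" for i
  proof -
    have "Inr i \<in> gen_vars n" "Inl (k - i) \<in> gen_vars n"
      using that k by (auto simp: gen_vars_def)
    then show ?thesis using vars_mult[of "Var (Inr i)" "Var (Inl (k - i))"] by auto
  qed
  have "esym_via_gens j = Var (Inl k) + (\<Sum>i\<in>{1..k}. Var (Inr i) * Var (Inl (k - i)))"
    using False by (simp add: esym_via_gens_def k_def)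
  then have "vars (esym_via_gens j) \<subseteq>
      vars (Var (Inl k)) \<union> vars (\<Sum>i\<in>{1..k}. Var (Inr i) * Var (Inl (k - i)) :: (nat + nat) mpoly)"
    by (simp only: vars_add)
  moreover have "vars (\<Sum>i\<in>{1..k}. Var (Inr i) * Var (Inl (k - i)) :: (nat + nat) mpoly) \<subseteq> gen_vars n"
    by (rule order.trans[OF vars_sum]) (use summand in blast)
  moreover have "Inl k \<in> gen_vars n" using k by (auto simp: gen_vars_def)
  ultimately show ?thesis by auto
qed

lemma Var_Inl_in_subst_esym_via_gens_image:
  "2*k+1 \<le> n \<Longrightarrow> Var (Inl k) \<in> subst esym_via_gens ` {r. vars r \<subseteq> {1..n}}"
proof (induction k rule: less_induct)
  case (less k)
  have "Var (Inl (k - i)) \<in> subst esym_via_gens ` {r. vars r \<subseteq> {1..n}}" if "i \<in> {1..k}" for i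
    using that less.prems by (intro less.IH) auto
  then have "\<forall>i\<in>{1..k}. \<exists>r\<in>{r. vars r \<subseteq> {1..n}}. Var (Inl (k - i)) = subst esym_via_gens r"
    unfolding image_iff by blast
  then obtain R where R: "\<And>i. i \<in> {1..k} \<Longrightarrow> vars (R i) \<subseteq> {1..n}"
      "\<And>i. i \<in> {1..k} \<Longrightarrow> subst esym_via_gens (R i) = Var (Inl (k - i))"
    by (metis (mono_tags, lifting) bchoice mem_Collect_eq)
  define r where "r = Var (2*k+1) - (\<Sum>i\<in>{1..k}. Var (2*i) * R i)"
  have "subst esym_via_gens r
      = esym_via_gens (2*k+1) - (\<Sum>i\<in>{1..k}. esym_via_gens (2*i) * subst esym_via_gens (R i))"
    by (simp add: r_def subst_diff subst_sum subst_mult)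
  also have "(\<Sum>i\<in>{1..k}. esym_via_gens (2*i) * subst esym_via_gens (R i))
      = (\<Sum>i\<in>{1..k}. Var (Inr i) * Var (Inl (k - i)))"
    by (intro sum.cong refl) (simp add: esym_via_gens_def R(2))
  also have "esym_via_gens (2*k+1) = Var (Inl k) + (\<Sum>i\<in>{1..k}. Var (Inr i) * Var (Inl (k - i)))"
    by (simp add: esym_via_gens_def)
  finally have "subst esym_via_gens r = Var (Inl k)" by simp
  moreover have "vars r \<subseteq> {1..n}"
  proof -
    have summand: "vars (Var (2*i) * R i) \<subseteq> {1..n}" if "i \<in> {1..k}" for i
      using vars_mult[of "Var (2*i)" "R i"] R(1)[OF that] that less.prems by auto
    have "vars (\<Sum>i\<in>{1..k}. Var (2*i) * R i) \<subseteq> {1..n}"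
      by (rule order.trans[OF vars_sum]) (use summand in blast)
    moreover have "vars (Var (2*k+1) :: nat mpoly) \<subseteq> {1..n}" using less.prems by simp
    ultimately show ?thesis
      using vars_diff[of "Var (2*k+1)" "\<Sum>i\<in>{1..k}. Var (2*i) * R i"] unfolding r_def by blast
  qed
  ultimately show ?case by (auto intro!: image_eqI[of _ _ r])
qed

lemma subst_esym_via_gens_image:
  assumes "n \<ge> 1"
  shows "subst esym_via_gens ` {r. vars r \<subseteq> {1..n}} = {q. vars q \<subseteq> gen_vars n}"
proof
  show "subst esym_via_gens ` {r. vars r \<subseteq> {1..n}} \<subseteq> {q. vars q \<subseteq> gen_vars n}"
    using vars_subst[of esym_via_gens] vars_esym_via_gens by blast
  show "{q. vars q \<subseteq> gen_vars n} \<subseteq> subst esym_via_gens ` {r. vars r \<subseteq> {1..n}}"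
  proof (rule subst_image_superset)
    fix v assume "v \<in> gen_vars n"
    then consider (z) k where "v = Inl k" "k \<le> (n-1) div 2" | (\<sigma>) k where "v = Inr k" "k \<in> {1..n div 2}"
      unfolding gen_vars_def by auto
    then show "Var v \<in> subst esym_via_gens ` {r. vars r \<subseteq> {1..n}}"
    proof cases
      case z
      then have "2*k+1 \<le> n" using assms by presburger
      then show ?thesis using Var_Inl_in_subst_esym_via_gens_image z(1) by simp
    next
      case \<sigma>
      then have "vars (Var (2*k) :: nat mpoly) \<subseteq> {1..n}" "subst esym_via_gens (Var (2*k)) = Var v"
        by (auto simp: esym_via_gens_def)
      then show ?thesis by (intro image_eqI[of _ _ "Var (2*k)"]) auto
    qed
  qed
qed

theorem corollary5p6:
  fixes n :: nat
  assumes "n \<ge> 1"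
  shows "inj_on (subst (\<lambda>v. case v of Inl k \<Rightarrow> zz n (2*k) | Inr k \<Rightarrow> esym n (2*k)))
            {q :: (nat + nat) mpoly. vars q \<subseteq> Inl ` {0..(n-1) div 2} \<union> Inr ` {1..n div 2}}
       \<and> subst (\<lambda>v. case v of Inl k \<Rightarrow> zz n (2*k) | Inr k \<Rightarrow> esym n (2*k))
            ` {q :: (nat + nat) mpoly. vars q \<subseteq> Inl ` {0..(n-1) div 2} \<union> Inr ` {1..n div 2}}
         = sym_polys n"
proof -
  have onto: "subst esym_via_gens ` {r. vars r \<subseteq> {1..n}} = {q. vars q \<subseteq> gen_vars n}"
    using assms by (rule subst_esym_via_gens_image)
  have comp: "subst (gens n) \<circ> subst esym_via_gens = subst (esym n)"
    by (simp add: fun_eq_iff subst_gens_subst_esym_via_gens)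
  have "inj_on (subst (gens n)) {q. vars q \<subseteq> gen_vars n}"
    unfolding onto[symmetric] by (rule inj_on_imageI) (unfold comp, rule inj_on_subst_esym)
  moreover have "subst (gens n) ` {q. vars q \<subseteq> gen_vars n} = sym_polys n"
    unfolding onto[symmetric] image_comp comp by (rule subst_esym_image)
  ultimately show ?thesis
    unfolding gens_def gen_vars_def by simp
qed

end
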